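(* Let $A$ be a matching in $K_{2n}$ and let $M$ be uniformly random among perfect matchings of $K_{2n}$ containing $A$. Apply the following procedure $r_A$: set $A':=A$, $M':=M$; while $A'\ne\emptyset$: pick any $(u,v)\in A'$; pick an edge of $M'\setminus A'$ uniformly at random and order its endpoints uniformly at random as $(x,y)$; with probability $1-\frac1{2|M'\setminus A'|+1}$ replace the edges $\{u,v\},\{x,y\}$ in $M'$ by $\{u,y\},\{v,x\}$; then remove $(u,v)$ from $A'$. Output $M'$. Then $r_A(M)$ is a uniformly random perfect matching of $K_{2n}$. Moreover, for every perfect matching $M\supseteq A$, every edge of $r_A(M)$ not in $M$ is incident to a vertex covered by $A$; in particular, if $B$ is an edge set with $A\cup B$ a matching and $B\not\subseteq M$, then $B\not\subseteq r_A(M)$.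
   Context: (When $M'\setminus A'=\emptyset$ the replacement step happens with probability $0$.) *)

theory Defs
  imports "HOL-Probability.Probability_Mass_Function"
begin

definition Kedges :: "nat \<Rightarrow> nat set set" where
  "Kedges n = {e. \<exists>x y. e = {x, y} \<and> x \<noteq> y \<and> x < 2*n \<and> y < 2*n}"

definition is_matching :: "nat \<Rightarrow> nat set set \<Rightarrow> bool" where
  "is_matching n A \<longleftrightarrow> A \<subseteq> Kedges n \<and> (\<forall>e\<in>A. \<forall>f\<in>A. e \<noteq> f \<longrightarrow> e \<inter> f = {})"

definition is_perfect_matching :: "nat \<Rightarrow> nat set set \<Rightarrow> bool" where
  "is_perfect_matching n M \<longleftrightarrow> is_matching n M \<and> \<Union>M = {..<2*n}"

text \<open>A selector picks, in state (A', M'), the oriented edge (u,v) of A' to process.\<close>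
definition valid_selector :: "nat set set \<Rightarrow> (nat set set \<Rightarrow> nat set set \<Rightarrow> nat \<times> nat) \<Rightarrow> bool" where
  "valid_selector A sel \<longleftrightarrow>
     (\<forall>A' M'. A' \<subseteq> A \<and> A' \<noteq> {} \<longrightarrow> {fst (sel A' M'), snd (sel A' M')} \<in> A')"

definition rA_step :: "(nat set set \<Rightarrow> nat set set \<Rightarrow> nat \<times> nat)
    \<Rightarrow> nat set set \<times> nat set set \<Rightarrow> (nat set set \<times> nat set set) pmf" where
  "rA_step sel s = (case s of (A', M') \<Rightarrow>
     (case sel A' M' of (u, v) \<Rightarrow>
       (let R = M' - A'; A'' = A' - {{u, v}} in
        if R = {} then return_pmf (A'', M')
        else
          do { e \<leftarrow> pmf_of_set R;
               xy \<leftarrow> pmf_of_set {(x, y). {x, y} = e \<and> x \<noteq> y};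
               b \<leftarrow> bernoulli_pmf (1 - 1 / (2 * real (card R) + 1));
               return_pmf (A'',
                 if b then (M' - {{u, v}, {fst xy, snd xy}}) \<union> {{u, snd xy}, {v, fst xy}}
                 else M') })))"

fun rA_iter :: "(nat set set \<Rightarrow> nat set set \<Rightarrow> nat \<times> nat) \<Rightarrow> nat
    \<Rightarrow> nat set set \<times> nat set set \<Rightarrow> (nat set set \<times> nat set set) pmf" where
  "rA_iter sel 0 s = return_pmf s"
| "rA_iter sel (Suc k) s = bind_pmf (rA_step sel s) (rA_iter sel k)"

text \<open>The procedure r_A: the while loop runs exactly |A| times (one edge of A' removed each time).\<close>
definition rA :: "(nat set set \<Rightarrow> nat set set \<Rightarrow> nat \<times> nat) \<Rightarrow> nat set set
    \<Rightarrow> nat set set \<Rightarrow> nat set set pmf" where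
  "rA sel A M = map_pmf snd (rA_iter sel (card A) (A, M))"

end

theory Submission
  imports Defs
begin

text \<open>
  Forcing an edge \<open>{u, v}\<close> into a perfect matching \<open>N\<close> means matching \<open>u\<close> with \<open>v\<close> and
  their former partners with each other. Forcings of disjoint edges commute, so forcing a whole
  matching \<open>B\<close> into \<open>N\<close> is well defined.

  One iteration of \<open>r\<^sub>A\<close>, processing \<open>(u, v)\<close> in state \<open>(B, M)\<close>, keeps \<open>M\<close> with probability
  \<open>1 / (2|M - B| + 1)\<close> and otherwise forces \<open>{u, y}\<close> for a uniformly random oriented edge
  \<open>(x, y)\<close> of \<open>M - B\<close>. These \<open>2|M - B| + 1\<close> equally likely outcomes are exactly the perfect
  matchings \<open>N \<supseteq> B - {{u, v}}\<close> into which forcing \<open>{u, v}\<close> gives back \<open>M\<close>. By induction,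
  \<open>r\<^sub>A(M)\<close> is uniform on the fibre over \<open>M\<close> of ``force \<open>A\<close>'', and all these fibres have
  the same size \<open>\<Prod>j<|A|. 2(n - 1 - j) + 1\<close>; so mixing over a uniform \<open>M \<supseteq> A\<close> gives the
  uniform perfect matching. An edge of \<open>r\<^sub>A(M)\<close> avoiding the vertices of \<open>A\<close> survives
  forcing \<open>A\<close>, hence already lies in \<open>M\<close>.
\<close>

section \<open>Perfect matchings as fixed-point-free involutions\<close>

definition mate :: "nat set set \<Rightarrow> nat \<Rightarrow> nat" where
  "mate N a = (THE b. {a, b} \<in> N)"

definition perfect_involution :: "nat \<Rightarrow> (nat \<Rightarrow> nat) \<Rightarrow> bool" where
  "perfect_involution n g \<longleftrightarrow> (\<forall>a<2*n. g a < 2*n \<and> g a \<noteq> a \<and> g (g a) = a)"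

definition involution_matching :: "nat \<Rightarrow> (nat \<Rightarrow> nat) \<Rightarrow> nat set set" where
  "involution_matching n g = (\<lambda>a. {a, g a}) ` {..<2*n}"

lemma perfect_involutionD:
  "perfect_involution n g \<Longrightarrow> a < 2*n \<Longrightarrow> g a < 2*n \<and> g a \<noteq> a \<and> g (g a) = a"
  unfolding perfect_involution_def by blast

lemma finite_Kedges: "finite (Kedges n)"
  by (rule finite_subset[of _ "Pow {..<2*n}"]) (auto simp: Kedges_def)

lemma finite_matching: "is_matching n A \<Longrightarrow> finite A"
  unfolding is_matching_def using finite_Kedges finite_subset by blast

lemma matching_disjoint: "is_matching n A \<Longrightarrow> e \<in> A \<Longrightarrow> f \<in> A \<Longrightarrow> e \<noteq> f \<Longrightarrow> e \<inter> f = {}"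
  unfolding is_matching_def by simp

lemma matching_edgeE:
  assumes "is_matching n A" "e \<in> A"
  obtains x y where "e = {x, y}" "x \<noteq> y" "x < 2*n" "y < 2*n"
  using assms unfolding is_matching_def Kedges_def by auto

lemma matching_subset: "is_matching n A \<Longrightarrow> B \<subseteq> A \<Longrightarrow> is_matching n B"
  unfolding is_matching_def by (meson subset_iff)

lemma finite_perfect_matchings: "finite {N. is_perfect_matching n N}"
  by (rule finite_subset[of _ "Pow (Kedges n)"])
     (auto simp: is_perfect_matching_def is_matching_def finite_Kedges)

lemma perfect_matching_edgeE:
  assumes "is_perfect_matching n N" "e \<in> N"
  obtains x y where "e = {x, y}" "x \<noteq> y" "x < 2*n" "y < 2*n"
  using assms unfolding is_perfect_matching_def is_matching_def Kedges_def by blast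

lemma perfect_matching_disjoint:
  "is_perfect_matching n N \<Longrightarrow> e \<in> N \<Longrightarrow> f \<in> N \<Longrightarrow> a \<in> e \<Longrightarrow> a \<in> f \<Longrightarrow> e = f"
  unfolding is_perfect_matching_def is_matching_def by blast

lemma perfect_matching_mate:
  assumes N: "is_perfect_matching n N" and a: "a < 2*n"
  shows "{a, mate N a} \<in> N" "mate N a \<noteq> a" "mate N a < 2*n"
proof -
  obtain e where e: "e \<in> N" "a \<in> e" using N a unfolding is_perfect_matching_def by blast
  obtain b where b: "e = {a, b}" "b \<noteq> a" "b < 2*n"
    using perfect_matching_edgeE[OF N e(1)] e(2) by (metis insert_commute insertE singletonD)
  have "{a, b'} \<in> N \<Longrightarrow> b' = b" for b'
    using perfect_matching_disjoint[OF N _ e(1), of "{a, b'}" a] b e by (auto simp: doubleton_eq_iff)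
  then have "mate N a = b" unfolding mate_def using b e by blast
  then show "{a, mate N a} \<in> N" "mate N a \<noteq> a" "mate N a < 2*n" using b e by auto
qed

lemma perfect_matching_edge_eq:
  assumes N: "is_perfect_matching n N" and "e \<in> N" "a \<in> e"
  shows "e = {a, mate N a}"
proof -
  have "a < 2*n" using assms unfolding is_perfect_matching_def by blast
  then show ?thesis
    using perfect_matching_disjoint[OF N assms(2) perfect_matching_mate(1)[OF N]] assms(3) by auto
qed

lemma perfect_matching_mate_eq:
  "is_perfect_matching n N \<Longrightarrow> {a, b} \<in> N \<Longrightarrow> mate N a = b"
  using perfect_matching_edge_eq[of n N "{a, b}" a] perfect_matching_edgeE[of n N "{a, b}"]
  by (auto simp: doubleton_eq_iff)

lemma perfect_involution_mate:
  assumes N: "is_perfect_matching n N"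
  shows "perfect_involution n (mate N)"
  unfolding perfect_involution_def
  using perfect_matching_mate[OF N] perfect_matching_mate_eq[OF N]
  by (metis insert_commute)

lemma involution_matching_mate:
  assumes "is_perfect_matching n N"
  shows "involution_matching n (mate N) = N"
proof
  show "involution_matching n (mate N) \<subseteq> N"
    unfolding involution_matching_def using perfect_matching_mate[OF assms] by auto
  show "N \<subseteq> involution_matching n (mate N)"
  proof
    fix e assume e: "e \<in> N"
    then obtain x y where "e = {x, y}" "x < 2*n"
      by (rule perfect_matching_edgeE[OF assms])
    then show "e \<in> involution_matching n (mate N)"
      unfolding involution_matching_def using perfect_matching_edge_eq[OF assms e, of x] by auto
  qed
qed

lemma involution_matching_cong:
  "(\<And>a. a < 2*n \<Longrightarrow> g a = g' a) \<Longrightarrow> involution_matching n g = involution_matching n g'"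
  unfolding involution_matching_def by auto

lemma perfect_matching_involution_matching:
  assumes g: "perfect_involution n g"
  shows "is_perfect_matching n (involution_matching n g)"
proof -
  note g' = perfect_involutionD[OF g]
  have "{a, g a} \<inter> {b, g b} = {}" if "a < 2*n" "b < 2*n" "{a, g a} \<noteq> {b, g b}" for a b
    using that g'[OF that(1)] g'[OF that(2)] by (auto simp: insert_commute)
  then show ?thesis using g'
    unfolding is_perfect_matching_def is_matching_def involution_matching_def Kedges_def
    by fastforce
qed

lemma mate_involution_matching:
  assumes g: "perfect_involution n g" and a: "a < 2*n"
  shows "mate (involution_matching n g) a = g a"
  using perfect_matching_mate_eq[OF perfect_matching_involution_matching[OF g]] a
  unfolding involution_matching_def by blast

lemma perfect_matching_eqI:
  assumes "is_perfect_matching n N" "is_perfect_matching n N'"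
    and "\<And>a. a < 2*n \<Longrightarrow> mate N a = mate N' a"
  shows "N = N'"
  using involution_matching_mate[OF assms(1)] involution_matching_mate[OF assms(2)]
    involution_matching_cong[of n "mate N" "mate N'"] assms(3) by metis

lemma card_perfect_matching:
  assumes N: "is_perfect_matching n N"
  shows "card N = n"
proof -
  have fin: "finite N" using N finite_matching unfolding is_perfect_matching_def by blast
  have two: "card e = 2" if "e \<in> N" for e
    using perfect_matching_edgeE[OF N that] by fastforce
  have "2 * n = card (\<Union>N)" using N unfolding is_perfect_matching_def by simp
  also have "\<dots> = (\<Sum>e\<in>N. card e)"
    using fin two N unfolding is_perfect_matching_def is_matching_def
    by (intro card_Union_disjoint) (auto simp: pairwise_def disjnt_def intro: card_ge_0_finite)
  also have "\<dots> = 2 * card N" using two by simp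
  finally show ?thesis by simp
qed

lemma ex_perfect_matching: "\<exists>N. is_perfect_matching n N"
proof -
  define g :: "nat \<Rightarrow> nat" where "g a = (if even a then a + 1 else a - 1)" for a
  have "perfect_involution n g"
    unfolding perfect_involution_def g_def by (auto elim: oddE)
  then show ?thesis using perfect_matching_involution_matching by blast
qed

section \<open>Forcing edges\<close>

definition pair_up :: "nat \<Rightarrow> nat \<Rightarrow> (nat \<Rightarrow> nat) \<Rightarrow> nat \<Rightarrow> nat" where
  "pair_up u v g a = (if a = u then v else if a = v then u else if a = g u then g v
                      else if a = g v then g u else g a)"

lemma perfect_involution_pair_up:
  assumes g: "perfect_involution n g" and "u < 2*n" "v < 2*n" "u \<noteq> v"
  shows "perfect_involution n (pair_up u v g)"
  unfolding perfect_involution_def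
proof (intro allI impI)
  fix a assume a: "a < 2*n"
  have "g u < 2*n" "g v < 2*n" "g a < 2*n" "g (g u) = u" "g (g v) = v" "g (g a) = a"
    "g u \<noteq> u" "g v \<noteq> v" "g a \<noteq> a"
    using perfect_involutionD[OF g] assms(2,3) a by auto
  then show "pair_up u v g a < 2*n \<and> pair_up u v g a \<noteq> a \<and> pair_up u v g (pair_up u v g a) = a"
    using assms(2-4) a unfolding pair_up_def by (smt (verit))
qed

lemma pair_up_sym:
  assumes g: "perfect_involution n g" and "u < 2*n" "v < 2*n"
  shows "pair_up u v g a = pair_up v u g a"
proof -
  have "g (g u) = u" "g (g v) = v" using perfect_involutionD[OF g] assms(2,3) by auto
  then show ?thesis unfolding pair_up_def by auto
qed

lemma pair_up_commute:
  assumes g: "perfect_involution n g" and "u < 2*n" "v < 2*n" "u' < 2*n" "v' < 2*n" "a < 2*n"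
    and "u \<noteq> v" "u' \<noteq> v'" "u \<noteq> u'" "u \<noteq> v'" "v \<noteq> u'" "v \<noteq> v'"
  shows "pair_up u v (pair_up u' v' g) a = pair_up u' v' (pair_up u v g) a"
proof -
  have "g (g u) = u" "g (g v) = v" "g (g u') = u'" "g (g v') = v'" "g (g a) = a"
    "g u \<noteq> u" "g v \<noteq> v" "g u' \<noteq> u'" "g v' \<noteq> v'" "g a \<noteq> a"
    using perfect_involutionD[OF g] assms(2-6) by auto
  then show ?thesis using assms(7-12) unfolding pair_up_def by (smt (verit))
qed

lemma pair_up_restore:
  assumes g: "perfect_involution n g" and "u < 2*n" "b < 2*n"
  shows "pair_up u (g u) (pair_up u b g) a = g a"
proof -
  have "g (g u) = u" "g (g b) = b" "g u \<noteq> u" "g b \<noteq> b"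
    using perfect_involutionD[OF g] assms(2,3) by auto
  then show ?thesis unfolding pair_up_def by auto
qed

lemma pair_up_cong:
  "g u = g' u \<Longrightarrow> g v = g' v \<Longrightarrow> g a = g' a \<Longrightarrow> pair_up u v g a = pair_up u v g' a"
  unfolding pair_up_def by simp

text \<open>\<open>Min\<close> and \<open>Max\<close> merely orient \<open>e\<close> (the result does not depend on the orientation). The
  guard makes \<open>force_edge n e\<close> total, so that forcings of disjoint edges commute unconditionally
  and can be folded over a matching.\<close>

definition force_edge :: "nat \<Rightarrow> nat set \<Rightarrow> nat set set \<Rightarrow> nat set set" where
  "force_edge n e N = (if is_perfect_matching n N \<and> e \<in> Kedges n
     then involution_matching n (pair_up (Min e) (Max e) (mate N)) else N)"

lemma force_edge_eq_involution_matching: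
  assumes N: "is_perfect_matching n N" and "u < 2*n" "v < 2*n" "u \<noteq> v"
  shows "force_edge n {u, v} N = involution_matching n (pair_up u v (mate N))"
proof -
  have "{u, v} \<in> Kedges n" using assms unfolding Kedges_def by blast
  moreover have "involution_matching n (pair_up v u (mate N)) = involution_matching n (pair_up u v (mate N))"
    using pair_up_sym[OF perfect_involution_mate[OF N] assms(3,2)]
    by (intro involution_matching_cong) blast
  moreover have "Min {u, v} = min u v" "Max {u, v} = max u v" by auto
  ultimately show ?thesis
    using N assms(4) unfolding force_edge_def by (cases "u < v") (simp_all add: min_def max_def)
qed

lemma
  assumes N: "is_perfect_matching n N" and "u < 2*n" "v < 2*n" "u \<noteq> v"
  shows perfect_matching_force_edge: "is_perfect_matching n (force_edge n {u, v} N)"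
    and mate_force_edge: "a < 2*n \<Longrightarrow> mate (force_edge n {u, v} N) a = pair_up u v (mate N) a"
  using perfect_involution_pair_up[OF perfect_involution_mate[OF N] assms(2-4)]
  by (simp_all add: force_edge_eq_involution_matching[OF assms] perfect_matching_involution_matching
        mate_involution_matching)

lemma force_edge_notin_Kedges:
  "\<not> is_perfect_matching n N \<or> e \<notin> Kedges n \<Longrightarrow> force_edge n e N = N"
  unfolding force_edge_def by auto

lemma involution_matching_pair_up_subset:
  assumes m: "perfect_involution n m" and uv: "u < 2*n" "v < 2*n" "u \<noteq> v"
  shows "involution_matching n (pair_up u v m)
    \<subseteq> involution_matching n m - {{u, m u}, {v, m v}} \<union> {{u, v}, {m u, m v}}"
proof
  fix f assume "f \<in> involution_matching n (pair_up u v m)"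
  then obtain a where a: "a < 2*n" "f = {a, pair_up u v m a}" unfolding involution_matching_def by auto
  show "f \<in> involution_matching n m - {{u, m u}, {v, m v}} \<union> {{u, v}, {m u, m v}}"
  proof (cases "a \<in> {u, v, m u, m v}")
    case True
    then consider "a = u" | "a \<noteq> u" "a = v" | "a \<notin> {u, v}" "a = m u"
      | "a \<notin> {u, v, m u}" "a = m v" by blast
    then have "f = {u, v} \<or> f = {m u, m v}"
      using a(2) unfolding pair_up_def by cases (auto simp: insert_commute)
    then show ?thesis by blast
  next
    case False
    then have "pair_up u v m a = m a" unfolding pair_up_def by auto
    then have "f = {a, m a}" "f \<noteq> {u, m u}" "f \<noteq> {v, m v}"
      using a False by (auto simp: doubleton_eq_iff)
    then show ?thesis using a(1) unfolding involution_matching_def by blast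
  qed
qed

lemma involution_matching_pair_up_supset:
  assumes m: "perfect_involution n m" and uv: "u < 2*n" "v < 2*n" "u \<noteq> v"
  shows "involution_matching n m - {{u, m u}, {v, m v}} \<union> {{u, v}, {m u, m v}}
    \<subseteq> involution_matching n (pair_up u v m)"
proof
  let ?g = "pair_up u v m"
  have mu: "m u < 2*n" "m (m u) = u" "m u \<noteq> u" and mv: "m (m v) = v"
    using perfect_involutionD[OF m] uv by auto
  fix f assume f: "f \<in> involution_matching n m - {{u, m u}, {v, m v}} \<union> {{u, v}, {m u, m v}}"
  show "f \<in> involution_matching n ?g"
  proof (cases "f \<in> {{u, v}, {m u, m v}}")
    case True
    have "{u, v} = {u, ?g u}" unfolding pair_up_def by simp
    moreover have "{m u, m v} = {u, ?g u}" if "m u = v"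
      using that mu(2) unfolding pair_up_def by (auto simp: insert_commute)
    moreover have "{m u, m v} = {m u, ?g (m u)}" if "m u \<noteq> v"
      using that mu uv unfolding pair_up_def by auto
    ultimately show ?thesis using True uv mu unfolding involution_matching_def by blast
  next
    case False
    then obtain a where a: "a < 2*n" "f = {a, m a}" "f \<noteq> {u, m u}" "f \<noteq> {v, m v}"
      using f unfolding involution_matching_def by auto
    then have "a \<notin> {u, v, m u, m v}" using mu mv by (auto simp: insert_commute)
    then have "f = {a, ?g a}" using a(2) unfolding pair_up_def by auto
    then show ?thesis using a(1) unfolding involution_matching_def by blast
  qed
qed

lemma force_edge_eq:
  assumes N: "is_perfect_matching n N" and uv: "u < 2*n" "v < 2*n" "u \<noteq> v"
  shows "force_edge n {u, v} N =
    N - {{u, mate N u}, {v, mate N v}} \<union> {{u, v}, {mate N u, mate N v}}"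
  using involution_matching_pair_up_subset[OF perfect_involution_mate[OF N] uv]
    involution_matching_pair_up_supset[OF perfect_involution_mate[OF N] uv]
  unfolding force_edge_eq_involution_matching[OF assms] involution_matching_mate[OF N]
  by (rule equalityI)

lemma
  assumes N: "is_perfect_matching n N" and "u < 2*n" "v < 2*n" "u \<noteq> v"
  shows edge_in_force_edge: "{u, v} \<in> force_edge n {u, v} N"
    and force_edge_keeps_disjoint: "f \<in> N \<Longrightarrow> f \<inter> {u, v} = {} \<Longrightarrow> f \<in> force_edge n {u, v} N"
  by (auto simp: force_edge_eq[OF assms])

lemma force_edge_of_edge:
  assumes N: "is_perfect_matching n N" and e: "{u, v} \<in> N"
  shows "force_edge n {u, v} N = N"
proof -
  obtain x y where "{u, v} = {x, y}" "x \<noteq> y" "x < 2*n" "y < 2*n"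
    by (rule perfect_matching_edgeE[OF N e])
  then have uv: "u < 2*n" "v < 2*n" "u \<noteq> v" by (auto simp: doubleton_eq_iff)
  have "mate N u = v" "mate N v = u"
    using perfect_matching_mate_eq[OF N] e by (auto simp: insert_commute)
  then show ?thesis using e by (auto simp: force_edge_eq[OF N uv] insert_commute)
qed

lemma force_edge_restore:
  assumes N: "is_perfect_matching n N" and e: "{u, a} \<in> N" and b: "b < 2*n" "b \<noteq> u"
  shows "force_edge n {u, a} (force_edge n {u, b} N) = N"
proof -
  have u: "u < 2*n" using e N unfolding is_perfect_matching_def by blast
  have a: "a = mate N u" "a < 2*n" "a \<noteq> u"
    using perfect_matching_mate[OF N u] perfect_matching_mate_eq[OF N e] by auto
  let ?N' = "force_edge n {u, b} N"
  have N': "is_perfect_matching n ?N'"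
    using perfect_matching_force_edge[OF N u b(1)] b(2) by auto
  show ?thesis
  proof (rule perfect_matching_eqI[OF perfect_matching_force_edge[OF N' u a(2) not_sym[OF a(3)]] N])
    fix c assume c: "c < 2*n"
    have "mate (force_edge n {u, a} ?N') c = pair_up u a (mate ?N') c"
      using mate_force_edge[OF N' u a(2)] a(3) c by auto
    also have "\<dots> = pair_up u a (pair_up u b (mate N)) c"
      using mate_force_edge[OF N u b(1)] b(2) a u c by (intro pair_up_cong) auto
    also have "\<dots> = mate N c"
      using pair_up_restore[OF perfect_involution_mate[OF N] u b(1)] a(1) by simp
    finally show "mate (force_edge n {u, a} ?N') c = mate N c" .
  qed
qed

lemma force_edge_commute:
  assumes "e1 \<in> Kedges n" "e2 \<in> Kedges n" "e1 \<inter> e2 = {}"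
  shows "force_edge n e1 (force_edge n e2 N) = force_edge n e2 (force_edge n e1 N)"
proof -
  obtain u1 v1 where e1: "e1 = {u1, v1}" "u1 \<noteq> v1" "u1 < 2*n" "v1 < 2*n"
    using assms(1) unfolding Kedges_def by blast
  obtain u2 v2 where e2: "e2 = {u2, v2}" "u2 \<noteq> v2" "u2 < 2*n" "v2 < 2*n"
    using assms(2) unfolding Kedges_def by blast
  show ?thesis
  proof (cases "is_perfect_matching n N")
    case False
    then show ?thesis by (simp add: force_edge_notin_Kedges)
  next
    case N: True
    have N1: "is_perfect_matching n (force_edge n e1 N)"
      and N2: "is_perfect_matching n (force_edge n e2 N)"
      using perfect_matching_force_edge[OF N] e1 e2 by auto
    show ?thesis
    proof (rule perfect_matching_eqI)
      show "is_perfect_matching n (force_edge n e1 (force_edge n e2 N))"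
        "is_perfect_matching n (force_edge n e2 (force_edge n e1 N))"
        using perfect_matching_force_edge N1 N2 e1 e2 by auto
      fix a assume a: "a < 2*n"
      have "mate (force_edge n e1 (force_edge n e2 N)) a
          = pair_up u1 v1 (pair_up u2 v2 (mate N)) a"
        using mate_force_edge[OF N2 e1(3,4,2)] mate_force_edge[OF N e2(3,4,2)] a e1 e2
        by (auto intro: pair_up_cong)
      also have "\<dots> = pair_up u2 v2 (pair_up u1 v1 (mate N)) a"
        using assms(3) e1 e2 a by (intro pair_up_commute[OF perfect_involution_mate[OF N]]) auto
      also have "\<dots> = mate (force_edge n e2 (force_edge n e1 N)) a"
        using mate_force_edge[OF N1 e2(3,4,2)] mate_force_edge[OF N e1(3,4,2)] a e1 e2
        by (auto intro: pair_up_cong)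
      finally show "mate (force_edge n e1 (force_edge n e2 N)) a
          = mate (force_edge n e2 (force_edge n e1 N)) a" .
    qed
  qed
qed

definition force_edges :: "nat \<Rightarrow> nat set set \<Rightarrow> nat set set \<Rightarrow> nat set set" where
  "force_edges n B N = Finite_Set.fold (force_edge n) N B"

lemma force_edges_remove:
  assumes B: "is_matching n B" and e: "e \<in> B"
  shows "force_edges n B N = force_edge n e (force_edges n (B - {e}) N)"
proof -
  have "comp_fun_commute_on B (force_edge n)"
  proof
    fix x y assume "x \<in> B" "y \<in> B"
    then show "force_edge n y \<circ> force_edge n x = force_edge n x \<circ> force_edge n y"
    proof (cases "x = y")
      case False
      have "y \<in> Kedges n" "x \<in> Kedges n" "y \<inter> x = {}"
        using B \<open>x \<in> B\<close> \<open>y \<in> B\<close> False matching_disjoint[OF B]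
        unfolding is_matching_def by auto
      then show ?thesis using force_edge_commute[of y n x] by (simp add: comp_def)
    qed simp
  qed
  then show ?thesis
    unfolding force_edges_def
    by (rule comp_fun_commute_on.fold_rec[OF _ subset_refl finite_matching[OF B] e])
qed

lemma force_edges_insert:
  assumes "is_matching n (insert e B)" "e \<notin> B"
  shows "force_edges n (insert e B) N = force_edge n e (force_edges n B N)"
  using force_edges_remove[OF assms(1) insertI1] assms(2) by (simp add: Diff_insert_absorb)

lemma
  assumes B: "is_matching n B" and N: "is_perfect_matching n N"
  shows perfect_matching_force_edges: "is_perfect_matching n (force_edges n B N)"
    and subset_force_edges: "B \<subseteq> force_edges n B N"
    and force_edges_keeps_disjoint: "f \<in> N \<Longrightarrow> f \<inter> \<Union>B = {} \<Longrightarrow> f \<in> force_edges n B N"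
proof -
  have "is_perfect_matching n (force_edges n B N) \<and> B \<subseteq> force_edges n B N
    \<and> (\<forall>f\<in>N. f \<inter> \<Union>B = {} \<longrightarrow> f \<in> force_edges n B N)"
    using finite_matching[OF B] B
  proof (induction B rule: finite_induct)
    case empty
    then show ?case using N by (simp add: force_edges_def)
  next
    case (insert e F)
    obtain u v where e: "e = {u, v}" "u \<noteq> v" "u < 2*n" "v < 2*n"
      using matching_edgeE[OF insert.prems insertI1] by blast
    let ?N = "force_edges n F N"
    have IH: "is_perfect_matching n ?N" "F \<subseteq> ?N" "\<forall>f\<in>N. f \<inter> \<Union>F = {} \<longrightarrow> f \<in> ?N"
      using insert.IH matching_subset[OF insert.prems subset_insertI] by auto
    have disj: "f \<inter> {u, v} = {}" if "f \<in> F" for f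
      using matching_disjoint[OF insert.prems, of f e] insert.hyps(2) that e(1) by auto
    show ?case
      unfolding force_edges_insert[OF insert.prems insert.hyps(2)] unfolding e(1)
    proof (intro conjI ballI impI subsetI)
      show "is_perfect_matching n (force_edge n {u, v} ?N)"
        using perfect_matching_force_edge[OF IH(1) e(3,4,2)] .
      show "f \<in> force_edge n {u, v} ?N" if "f \<in> insert {u, v} F" for f
        using that edge_in_force_edge[OF IH(1) e(3,4,2)] force_edge_keeps_disjoint[OF IH(1) e(3,4,2)]
          IH(2) disj by blast
      show "f \<in> force_edge n {u, v} ?N" if "f \<in> N" "f \<inter> \<Union> (insert {u, v} F) = {}" for f
        using that force_edge_keeps_disjoint[OF IH(1) e(3,4,2)] IH(3) by blast
    qed
  qed
  then show "is_perfect_matching n (force_edges n B N)" "B \<subseteq> force_edges n B N"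
    "f \<in> N \<Longrightarrow> f \<inter> \<Union>B = {} \<Longrightarrow> f \<in> force_edges n B N" by auto
qed

section \<open>Uniform distributions\<close>

lemma bind_bernoulli_pmf_of_set_insert:
  assumes T: "finite T" "x \<notin> T"
  shows "bind_pmf (bernoulli_pmf (1 - 1 / (real (card T) + 1)))
           (\<lambda>b. if b then pmf_of_set T else return_pmf x) = pmf_of_set (insert x T)"
proof (rule pmf_eqI)
  fix y
  define c where "c = real (card T)"
  have c: "c \<ge> 0" "c + 1 \<noteq> 0" unfolding c_def by simp_all
  have "pmf (bind_pmf (bernoulli_pmf (1 - 1 / (c + 1)))
         (\<lambda>b. if b then pmf_of_set T else return_pmf x)) y
      = (1 - 1 / (c + 1)) * pmf (pmf_of_set T) y + 1 / (c + 1) * indicator {x} y"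
    using c by (simp add: pmf_bind field_simps split: split_indicator)
  also have "\<dots> = indicator (insert x T) y / (c + 1)"
  proof (cases "T = {}")
    case False
    then have "c > 0" using T by (simp add: c_def card_gt_0_iff)
    then show ?thesis using T False c by (cases "y \<in> T") (auto simp: indicator_def c_def field_simps)
  qed (simp add: indicator_def c_def)
  also have "\<dots> = pmf (pmf_of_set (insert x T)) y"
    using T by (simp add: c_def)
  finally show "pmf (bind_pmf (bernoulli_pmf (1 - 1 / (real (card T) + 1)))
         (\<lambda>b. if b then pmf_of_set T else return_pmf x)) y = pmf (pmf_of_set (insert x T)) y"
    unfolding c_def .
qed

definition orientations :: "'a set \<Rightarrow> ('a \<times> 'a) set" where
  "orientations e = {(x, y). {x, y} = e \<and> x \<noteq> y}"

definition darts :: "'a set set \<Rightarrow> ('a \<times> 'a) set" where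
  "darts R = {(x, y). {x, y} \<in> R \<and> x \<noteq> y}"

lemma card_orientations:
  assumes "card e = 2"
  shows "card (orientations e) = 2"
proof -
  obtain a b where "e = {a, b}" "a \<noteq> b" using assms by (auto simp: card_2_iff)
  then have "orientations e = {(a, b), (b, a)}"
    unfolding orientations_def by (auto simp: doubleton_eq_iff)
  then show ?thesis using \<open>a \<noteq> b\<close> by simp
qed

lemma darts_eq_UN: "darts R = (\<Union>e\<in>R. orientations e)"
  unfolding darts_def orientations_def by auto

lemma disjoint_family_on_orientations: "disjoint_family_on orientations R"
  unfolding disjoint_family_on_def orientations_def by auto

lemma
  assumes R: "finite R" "\<And>e. e \<in> R \<Longrightarrow> card e = 2"
  shows finite_darts: "finite (darts R)"
    and card_darts: "card (darts R) = 2 * card R"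
proof -
  have fin: "finite (orientations e)" if "e \<in> R" for e
    using card_orientations[OF R(2)[OF that]] by (auto intro: card_ge_0_finite)
  then show "finite (darts R)" unfolding darts_eq_UN using R(1) by blast
  have "card (darts R) = (\<Sum>e\<in>R. card (orientations e))"
    unfolding darts_eq_UN using R(1) fin disjoint_family_on_orientations[of R]
    by (intro card_UN_disjoint) (auto simp: disjoint_family_on_def)
  also have "\<dots> = (\<Sum>e\<in>R. 2)" by (intro sum.cong) (simp_all add: card_orientations R(2))
  finally show "card (darts R) = 2 * card R" by simp
qed

lemma bind_pmf_of_set_orientations:
  assumes "finite R" "R \<noteq> {}" "\<And>e. e \<in> R \<Longrightarrow> card e = 2"
  shows "bind_pmf (pmf_of_set R) (\<lambda>e. pmf_of_set (orientations e)) = pmf_of_set (darts R)"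
proof -
  have "finite (orientations e)" "orientations e \<noteq> {}" "card (orientations e) = 2" if "e \<in> R" for e
    using card_orientations[OF assms(3)[OF that]] by (auto intro: card_ge_0_finite)
  then show ?thesis
    unfolding darts_eq_UN using assms(1,2) disjoint_family_on_orientations
    by (intro pmf_of_set_UN[symmetric]) auto
qed

section \<open>One iteration of the procedure\<close>

definition step_fibre :: "nat \<Rightarrow> nat set set \<Rightarrow> nat set set \<Rightarrow> nat \<Rightarrow> nat \<Rightarrow> nat set set set" where
  "step_fibre n B M u v =
     {N. is_perfect_matching n N \<and> B - {{u, v}} \<subseteq> N \<and> force_edge n {u, v} N = M}"

locale forcing_step =
  fixes n :: nat and B M :: "nat set set" and u v :: nat
  assumes perfect_M: "is_perfect_matching n M" and B_sub_M: "B \<subseteq> M" and uv_in_B: "{u, v} \<in> B"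
begin

lemma u_less: "u < 2*n" and v_less: "v < 2*n" and v_neq_u: "v \<noteq> u"
  and mate_u: "mate M u = v" and mate_v: "mate M v = u"
proof -
  have e: "{u, v} \<in> M" using uv_in_B B_sub_M by blast
  obtain x y where "{u, v} = {x, y}" "x \<noteq> y" "x < 2*n" "y < 2*n"
    by (rule perfect_matching_edgeE[OF perfect_M e])
  then show "u < 2*n" "v < 2*n" "v \<noteq> u" by (auto simp: doubleton_eq_iff)
  show "mate M u = v" "mate M v = u"
    using perfect_matching_mate_eq[OF perfect_M] e by (auto simp: insert_commute)
qed

lemma card_edge: "e \<in> M - B \<Longrightarrow> card e = 2"
  by (auto elim: perfect_matching_edgeE[OF perfect_M])

lemma finite_M: "finite M"
  using perfect_M finite_matching unfolding is_perfect_matching_def by blast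

lemma dart_props:
  assumes "(x, y) \<in> darts (M - B)"
  shows "y < 2*n" "mate M y = x" "y \<noteq> u" "y \<noteq> v" "{x, y} \<notin> B"
proof -
  have xy: "{x, y} \<in> M" "{x, y} \<notin> B" "x \<noteq> y" using assms unfolding darts_def by auto
  then show "y < 2*n" "{x, y} \<notin> B"
    using perfect_M unfolding is_perfect_matching_def by auto
  show x: "mate M y = x" using perfect_matching_mate_eq[OF perfect_M] xy(1) by (simp add: insert_commute)
  show "y \<noteq> u" "y \<noteq> v"
    using x mate_u mate_v xy(2) uv_in_B by (auto simp: insert_commute)
qed

lemma mate_force_edge_dart:
  assumes "(x, y) \<in> darts (M - B)"
  shows "mate (force_edge n {u, y} M) u = y"
  using mate_force_edge[OF perfect_M u_less dart_props(1)[OF assms] not_sym[OF dart_props(3)[OF assms]] u_less]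
  unfolding pair_up_def by simp

lemma force_edge_dart:
  assumes "(x, y) \<in> darts (M - B)"
  shows "force_edge n {u, y} M = M - {{u, v}, {x, y}} \<union> {{u, y}, {v, x}}"
  using force_edge_eq[OF perfect_M u_less dart_props(1)[OF assms] not_sym[OF dart_props(3)[OF assms]]]
    mate_u dart_props(2)[OF assms] by (simp add: insert_commute)

lemma step_fibre_subset:
  assumes "N \<in> step_fibre n B M u v"
  shows "N \<in> insert M ((\<lambda>(x, y). force_edge n {u, y} M) ` darts (M - B))"
proof -
  have N: "is_perfect_matching n N" and B_N: "B - {{u, v}} \<subseteq> N"
    and M_eq: "force_edge n {u, v} N = M" using assms unfolding step_fibre_def by auto
  define y where "y = mate N u"
  have uy: "{u, y} \<in> N" "y \<noteq> u" "y < 2*n"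
    using perfect_matching_mate[OF N u_less] unfolding y_def by auto
  show ?thesis
  proof (cases "y = v")
    case True
    then show ?thesis using force_edge_of_edge[OF N] uy(1) M_eq by simp
  next
    case False
    define x where "x = mate M y"
    have "{x, y} \<in> M" "x \<noteq> y"
      using perfect_matching_mate[OF perfect_M uy(3)] unfolding x_def by (auto simp: insert_commute)
    moreover have "{x, y} \<notin> B"
    proof
      assume "{x, y} \<in> B"
      then have "{x, y} \<in> N" using B_N False uy(2) by (auto simp: doubleton_eq_iff)
      then have "x = u"
        using perfect_matching_disjoint[OF N _ uy(1), of "{x, y}" y] \<open>x \<noteq> y\<close>
        by (auto simp: doubleton_eq_iff)
      then show False
        using perfect_involutionD[OF perfect_involution_mate[OF perfect_M] uy(3)] mate_u False
        unfolding x_def by simp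
    qed
    ultimately have "(x, y) \<in> darts (M - B)" unfolding darts_def by auto
    moreover have "N = force_edge n {u, y} M"
      using force_edge_restore[OF N uy(1) v_less v_neq_u] M_eq by simp
    ultimately show ?thesis by blast
  qed
qed

lemma M_in_step_fibre: "M \<in> step_fibre n B M u v"
  using perfect_M B_sub_M force_edge_of_edge[OF perfect_M] uv_in_B
  unfolding step_fibre_def by auto

lemma force_edge_dart_in_step_fibre:
  assumes xy: "(x, y) \<in> darts (M - B)"
  shows "force_edge n {u, y} M \<in> step_fibre n B M u v"
proof -
  note y = dart_props[OF xy]
  let ?N = "force_edge n {u, y} M"
  have "f \<inter> {u, y} = {}" if "f \<in> B - {{u, v}}" for f
    using that perfect_matching_edge_eq[OF perfect_M, of f] B_sub_M mate_u y(2,5)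
    by (auto simp: insert_commute)
  then have "B - {{u, v}} \<subseteq> ?N"
    using force_edge_keeps_disjoint[OF perfect_M u_less y(1) not_sym[OF y(3)]] B_sub_M by blast
  moreover have "force_edge n {u, v} ?N = M"
    using force_edge_restore[OF perfect_M _ y(1,3)] mate_u perfect_matching_mate[OF perfect_M u_less]
    by simp
  ultimately show ?thesis
    using perfect_matching_force_edge[OF perfect_M u_less y(1) not_sym[OF y(3)]]
    unfolding step_fibre_def by simp
qed

lemma step_fibre_eq:
  "step_fibre n B M u v = insert M ((\<lambda>(x, y). force_edge n {u, y} M) ` darts (M - B))"
  using step_fibre_subset M_in_step_fibre force_edge_dart_in_step_fibre by auto

lemma inj_on_force_edge_darts:
  "inj_on (\<lambda>(x, y). force_edge n {u, y} M) (darts (M - B))"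
proof (rule inj_onI, clarify)
  fix x y x' y'
  assume d: "(x, y) \<in> darts (M - B)" "(x', y') \<in> darts (M - B)"
    and "force_edge n {u, y} M = force_edge n {u, y'} M"
  then have "y = y'" using mate_force_edge_dart by metis
  then show "x = x' \<and> y = y'" using dart_props(2) d by metis
qed

lemma M_notin_force_edge_darts:
  "M \<notin> (\<lambda>(x, y). force_edge n {u, y} M) ` darts (M - B)"
  using mate_force_edge_dart dart_props(4) mate_u by fastforce

lemma finite_darts_M: "finite (darts (M - B))"
  and card_darts_M: "card (darts (M - B)) = 2 * card (M - B)"
  using finite_darts[of "M - B"] card_darts[of "M - B"] finite_M card_edge by auto

lemma darts_nonempty: "M - B \<noteq> {} \<Longrightarrow> darts (M - B) \<noteq> {}"
  using card_darts_M finite_M by (auto simp: card_gt_0_iff)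

lemma finite_step_fibre: "finite (step_fibre n B M u v)"
  using finite_darts_M unfolding step_fibre_eq by simp

lemma card_M_minus_B: "card (M - B) = n - card B"
  using card_Diff_subset[OF finite_subset[OF B_sub_M finite_M] B_sub_M]
    card_perfect_matching[OF perfect_M] by simp

lemma card_step_fibre: "card (step_fibre n B M u v) = 2 * card (M - B) + 1"
  using card_darts_M finite_darts_M inj_on_force_edge_darts M_notin_force_edge_darts
  by (simp add: step_fibre_eq card_image)

lemma rA_step_eq_bind_darts:
  assumes sel: "sel B M = (u, v)" and R: "M - B \<noteq> {}"
  shows "rA_step sel (B, M) = bind_pmf (pmf_of_set (darts (M - B))) (\<lambda>(x, y).
           bind_pmf (bernoulli_pmf (1 - 1 / (2 * real (card (M - B)) + 1))) (\<lambda>b.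
             return_pmf (B - {{u, v}}, if b then force_edge n {u, y} M else M)))"
    (is "_ = bind_pmf _ (\<lambda>(x, y). bind_pmf ?coin (\<lambda>b. return_pmf (?C, if b then _ else M)))")
proof -
  let ?rewire = "\<lambda>xy. M - {{u, v}, {fst xy, snd xy}} \<union> {{u, snd xy}, {v, fst xy}}"
  have "rA_step sel (B, M) = bind_pmf (pmf_of_set (M - B)) (\<lambda>e.
      bind_pmf (pmf_of_set (orientations e)) (\<lambda>xy.
      bind_pmf ?coin (\<lambda>b. return_pmf (?C, if b then ?rewire xy else M))))"
    using sel R unfolding rA_step_def orientations_def by (simp add: Let_def)
  also have "\<dots> = bind_pmf (pmf_of_set (darts (M - B))) (\<lambda>xy.
      bind_pmf ?coin (\<lambda>b. return_pmf (?C, if b then ?rewire xy else M)))"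
  proof -
    have "pmf_of_set (darts (M - B)) = bind_pmf (pmf_of_set (M - B)) (\<lambda>e. pmf_of_set (orientations e))"
      using bind_pmf_of_set_orientations[of "M - B"] finite_M R card_edge by simp
    then show ?thesis by (simp add: bind_assoc_pmf)
  qed
  also have "\<dots> = bind_pmf (pmf_of_set (darts (M - B))) (\<lambda>(x, y).
      bind_pmf ?coin (\<lambda>b. return_pmf (?C, if b then force_edge n {u, y} M else M)))"
    using finite_darts_M darts_nonempty[OF R]
    by (intro bind_pmf_cong refl) (auto simp: force_edge_dart cong: if_cong)
  finally show ?thesis .
qed

lemma rA_step_eq:
  assumes sel: "sel B M = (u, v)"
  shows "rA_step sel (B, M) = map_pmf (Pair (B - {{u, v}})) (pmf_of_set (step_fibre n B M u v))"
proof (cases "M - B = {}")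
  case True
  then have no_darts: "darts (M - B) = {}" by (auto simp: darts_def)
  show ?thesis
    unfolding step_fibre_eq no_darts using sel True by (simp add: rA_step_def pmf_of_set_singleton)
next
  case False
  define F where "F = (\<lambda>(x::nat, y). force_edge n {u, y} M)"
  define D where "D = darts (M - B)"
  let ?coin = "bernoulli_pmf (1 - 1 / (2 * real (card (M - B)) + 1))" and ?C = "B - {{u, v}}"
  have D: "finite D" "D \<noteq> {}" "card (F ` D) = 2 * card (M - B)"
    using finite_darts_M card_darts_M darts_nonempty[OF False] inj_on_force_edge_darts
    unfolding D_def F_def by (auto simp: card_image)
  have "rA_step sel (B, M)
      = bind_pmf ?coin (\<lambda>b. bind_pmf (pmf_of_set D) (\<lambda>xy. return_pmf (?C, if b then F xy else M)))"
    unfolding rA_step_eq_bind_darts[of sel, OF sel False] D_def F_def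
    by (subst bind_commute_pmf) (simp add: case_prod_beta' cong: if_cong)
  also have "\<dots> = map_pmf (Pair ?C) (bind_pmf ?coin (\<lambda>b.
      if b then pmf_of_set (F ` D) else return_pmf M))"
    unfolding map_bind_pmf
  proof (intro bind_pmf_cong refl)
    fix b :: bool
    show "bind_pmf (pmf_of_set D) (\<lambda>xy. return_pmf (?C, if b then F xy else M))
        = map_pmf (Pair ?C) (if b then pmf_of_set (F ` D) else return_pmf M)"
      using map_pmf_of_set_inj[OF inj_on_force_edge_darts[folded F_def D_def] D(2,1), symmetric]
      by (cases b) (simp_all add: map_pmf_def[symmetric] map_pmf_comp)
  qed
  also have "\<dots> = map_pmf (Pair ?C) (pmf_of_set (insert M (F ` D)))"
    using bind_bernoulli_pmf_of_set_insert[of "F ` D" M] D M_notin_force_edge_darts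
    unfolding F_def D_def by simp
  finally show ?thesis unfolding step_fibre_eq F_def D_def .
qed

lemma map_snd_rA_iter_Suc:
  assumes "sel B M = (u, v)"
  shows "map_pmf snd (rA_iter sel (Suc k) (B, M))
    = bind_pmf (pmf_of_set (step_fibre n B M u v)) (\<lambda>N. map_pmf snd (rA_iter sel k (B - {{u, v}}, N)))"
  by (simp add: rA_step_eq[of sel, OF assms] map_bind_pmf bind_map_pmf)

end

definition force_edges_fibre :: "nat \<Rightarrow> nat set set \<Rightarrow> nat set set \<Rightarrow> nat set set set" where
  "force_edges_fibre n B M = {N. is_perfect_matching n N \<and> force_edges n B N = M}"

lemma finite_force_edges_fibre: "finite (force_edges_fibre n B M)"
  by (rule finite_subset[OF _ finite_perfect_matchings]) (auto simp: force_edges_fibre_def)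

lemma bind_pmf_of_set_force_edges_fibre:
  assumes S: "finite S" "S \<noteq> {}" and c: "\<And>N. N \<in> S \<Longrightarrow> card (force_edges_fibre n B N) = c" "c > 0"
  shows "bind_pmf (pmf_of_set S) (\<lambda>N. pmf_of_set (force_edges_fibre n B N))
           = pmf_of_set (\<Union>N\<in>S. force_edges_fibre n B N)"
    and "card (\<Union>N\<in>S. force_edges_fibre n B N) = card S * c"
proof -
  have disj: "disjoint_family_on (force_edges_fibre n B) S"
    unfolding disjoint_family_on_def force_edges_fibre_def by auto
  have ne: "force_edges_fibre n B N \<noteq> {}" if "N \<in> S" for N
    using c that by fastforce
  show "bind_pmf (pmf_of_set S) (\<lambda>N. pmf_of_set (force_edges_fibre n B N))
           = pmf_of_set (\<Union>N\<in>S. force_edges_fibre n B N)"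
    using S c(1) ne disj finite_force_edges_fibre by (intro pmf_of_set_UN[symmetric]) auto
  show "card (\<Union>N\<in>S. force_edges_fibre n B N) = card S * c"
    using S c(1) disj finite_force_edges_fibre
    by (subst card_UN_disjoint) (auto simp: disjoint_family_on_def)
qed

lemma force_edges_fibre_eq_UN_step_fibre:
  assumes B: "is_matching n B" and uv: "{u, v} \<in> B"
  shows "force_edges_fibre n B M
    = (\<Union>N\<in>step_fibre n B M u v. force_edges_fibre n (B - {{u, v}}) N)"
proof -
  have C: "is_matching n (B - {{u, v}})" using matching_subset[OF B] by blast
  have rec: "force_edges n B N = force_edge n {u, v} (force_edges n (B - {{u, v}}) N)" for N
    using force_edges_remove[OF B uv] .
  show ?thesis
    using perfect_matching_force_edges[OF C] subset_force_edges[OF C] unfolding force_edges_fibre_def step_fibre_def rec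
    by blast
qed

lemma valid_selector_mem:
  assumes "valid_selector A sel" "B \<subseteq> A" "B \<noteq> {}" "sel B M = (u, v)"
  shows "{u, v} \<in> B"
  using assms unfolding valid_selector_def by (metis fst_conv snd_conv)

lemma rA_iter_uniform:
  assumes A: "is_matching n A" "valid_selector A sel"
    and B: "B \<subseteq> A" "is_perfect_matching n M" "B \<subseteq> M"
  shows "map_pmf snd (rA_iter sel (card B) (B, M)) = pmf_of_set (force_edges_fibre n B M)
    \<and> card (force_edges_fibre n B M) = (\<Prod>j<card B. 2 * (n - Suc j) + 1)"
  using B
proof (induction "card B" arbitrary: B M)
  case 0
  then have "B = {}" using finite_matching[OF matching_subset[OF A(1)]] by auto
  then have "force_edges_fibre n B M = {M}"
    using "0.prems"(2) unfolding force_edges_fibre_def force_edges_def by auto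
  then show ?case using \<open>B = {}\<close> by (simp add: pmf_of_set_singleton)
next
  case (Suc k)
  have B: "is_matching n B" using matching_subset[OF A(1) Suc.prems(1)] .
  obtain u v where sel: "sel B M = (u, v)" by fastforce
  have "B \<noteq> {}" using Suc.hyps(2) by (cases "B = {}") simp_all
  then have uv: "{u, v} \<in> B" using valid_selector_mem[OF A(2) Suc.prems(1) _ sel] by blast
  interpret forcing_step n B M u v using Suc.prems uv by unfold_locales auto
  define C where "C = B - {{u, v}}"
  define S where "S = step_fibre n B M u v"
  have C: "C \<subseteq> A" "card C = k"
    using Suc.prems(1) Suc.hyps(2) uv finite_matching[OF B] unfolding C_def by auto
  have S: "finite S" "S \<noteq> {}"
    using finite_step_fibre M_in_step_fibre unfolding S_def by auto
  have IH: "map_pmf snd (rA_iter sel k (C, N)) = pmf_of_set (force_edges_fibre n C N)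
      \<and> card (force_edges_fibre n C N) = (\<Prod>j<k. 2 * (n - Suc j) + 1)" if "N \<in> S" for N
    using Suc.hyps(1)[of C N] C that unfolding S_def step_fibre_def C_def by auto
  have fibre: "force_edges_fibre n B M = (\<Union>N\<in>S. force_edges_fibre n C N)"
    unfolding S_def C_def by (rule force_edges_fibre_eq_UN_step_fibre[OF B uv])
  have "map_pmf snd (rA_iter sel (Suc k) (B, M))
      = bind_pmf (pmf_of_set S) (\<lambda>N. pmf_of_set (force_edges_fibre n C N))"
    unfolding map_snd_rA_iter_Suc[of sel, OF sel] S_def[symmetric] C_def[symmetric]
    using IH S by (intro bind_pmf_cong) auto
  also have "\<dots> = pmf_of_set (force_edges_fibre n B M)"
    unfolding fibre using IH S by (intro bind_pmf_of_set_force_edges_fibre) auto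
  moreover have "card B = Suc k" using Suc.hyps(2) by simp
  ultimately show ?case
    using bind_pmf_of_set_force_edges_fibre(2)[OF S, of n C] IH fibre card_step_fibre card_M_minus_B
    by (simp add: S_def algebra_simps)
qed

lemma rA_eq_pmf_of_set_force_edges_fibre:
  assumes "is_matching n A" "valid_selector A sel" "is_perfect_matching n M" "A \<subseteq> M"
  shows "rA sel A M = pmf_of_set (force_edges_fibre n A M)"
    and "card (force_edges_fibre n A M) = (\<Prod>j<card A. 2 * (n - Suc j) + 1)"
  using rA_iter_uniform[OF assms(1,2) subset_refl assms(3,4)] unfolding rA_def by auto

lemma bind_pmf_of_set_rA:
  assumes A: "is_matching n A" "valid_selector A sel"
  shows "bind_pmf (pmf_of_set {M. is_perfect_matching n M \<and> A \<subseteq> M}) (rA sel A)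
           = pmf_of_set {M. is_perfect_matching n M}"
proof -
  let ?T = "{M. is_perfect_matching n M \<and> A \<subseteq> M}"
  have fibres: "(\<Union>M\<in>?T. force_edges_fibre n A M) = {N. is_perfect_matching n N}"
    using perfect_matching_force_edges[OF A(1)] subset_force_edges[OF A(1)]
    unfolding force_edges_fibre_def by blast
  obtain N where "is_perfect_matching n N" using ex_perfect_matching by blast
  then have "force_edges n A N \<in> ?T"
    using perfect_matching_force_edges[OF A(1)] subset_force_edges[OF A(1)] by blast
  then have T: "finite ?T" "?T \<noteq> {}"
    using finite_perfect_matchings by (auto intro: finite_subset)
  have "bind_pmf (pmf_of_set ?T) (rA sel A)
      = bind_pmf (pmf_of_set ?T) (\<lambda>M. pmf_of_set (force_edges_fibre n A M))"
    using T rA_eq_pmf_of_set_force_edges_fibre(1)[OF A] by (intro bind_pmf_cong) auto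
  also have "\<dots> = pmf_of_set {N. is_perfect_matching n N}"
    unfolding fibres[symmetric] using T rA_eq_pmf_of_set_force_edges_fibre(2)[OF A]
    by (intro bind_pmf_of_set_force_edges_fibre) auto
  finally show ?thesis .
qed

lemma rA_new_edges_meet_matching:
  assumes A: "is_matching n A" "valid_selector A sel"
    and M: "is_perfect_matching n M" "A \<subseteq> M" and M': "M' \<in> set_pmf (rA sel A M)"
    and e: "e \<in> M' - M"
  shows "e \<inter> \<Union>A \<noteq> {}"
proof -
  have "card (force_edges_fibre n A M) > 0"
    using rA_eq_pmf_of_set_force_edges_fibre(2)[OF A M] by (simp add: prod_pos)
  then have "M' \<in> force_edges_fibre n A M"
    using M' rA_eq_pmf_of_set_force_edges_fibre(1)[OF A M] by (simp add: card_gt_0_iff)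
  then have "is_perfect_matching n M'" "force_edges n A M' = M"
    unfolding force_edges_fibre_def by auto
  then show ?thesis using force_edges_keeps_disjoint[OF A(1), of M' e] e by auto
qed

lemma not_subset_if_new_edges_meet:
  assumes AB: "is_matching n (A \<union> B)" and "A \<subseteq> M" "\<not> B \<subseteq> M"
    and new: "\<And>e. e \<in> M' - M \<Longrightarrow> e \<inter> \<Union>A \<noteq> {}"
  shows "\<not> B \<subseteq> M'"
proof
  assume "B \<subseteq> M'"
  then obtain b where b: "b \<in> B" "b \<in> M' - M" using assms(3) by auto
  then obtain a where "a \<in> A" "b \<inter> a \<noteq> {}" using new by blast
  moreover have "a \<noteq> b" using \<open>a \<in> A\<close> b assms(2) by auto
  ultimately show False using matching_disjoint[OF AB, of a b] b(1) by auto
qed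

theorem mainTheorem14:
  fixes n :: nat and A :: "nat set set"
    and sel :: "nat set set \<Rightarrow> nat set set \<Rightarrow> nat \<times> nat"
  assumes "is_matching n A"
    and "valid_selector A sel"
  shows "bind_pmf (pmf_of_set {M. is_perfect_matching n M \<and> A \<subseteq> M}) (rA sel A)
           = pmf_of_set {M. is_perfect_matching n M}
         \<and> (\<forall>M M'. is_perfect_matching n M \<and> A \<subseteq> M \<and> M' \<in> set_pmf (rA sel A M)
             \<longrightarrow> (\<forall>e\<in>M' - M. e \<inter> \<Union>A \<noteq> {})
               \<and> (\<forall>B. B \<subseteq> Kedges n \<and> is_matching n (A \<union> B) \<and> \<not> B \<subseteq> M \<longrightarrow> \<not> B \<subseteq> M'))"
proof (intro conjI allI impI ballI)
  show "bind_pmf (pmf_of_set {M. is_perfect_matching n M \<and> A \<subseteq> M}) (rA sel A)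
      = pmf_of_set {M. is_perfect_matching n M}"
    by (rule bind_pmf_of_set_rA[OF assms])
  fix M M'
  assume "is_perfect_matching n M \<and> A \<subseteq> M \<and> M' \<in> set_pmf (rA sel A M)"
  then have M: "is_perfect_matching n M" "A \<subseteq> M" "M' \<in> set_pmf (rA sel A M)" by simp_all
  show new: "e \<inter> \<Union>A \<noteq> {}" if "e \<in> M' - M" for e
    by (rule rA_new_edges_meet_matching[OF assms M that])
  fix B
  assume "B \<subseteq> Kedges n \<and> is_matching n (A \<union> B) \<and> \<not> B \<subseteq> M"
  then have B: "is_matching n (A \<union> B)" "\<not> B \<subseteq> M" by simp_all
  show "\<not> B \<subseteq> M'"
    by (rule not_subset_if_new_edges_meet[OF B(1) M(2) B(2) new])
qed

end
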